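(* Let $N$ be a Poisson process on $[0,\infty)$ with intensity $\lambda>0$, with points $0<X_1<X_2<\cdots$, and let $\epsilon>0$. For $n\ge0$ let $p_n(x)=\Pr(\beta_0(x)=n)$, $x\ge0$. Then for every integer $n\ge 0$ and every $s>0$, $$\int_0^\infty e^{-sx}p_n(x)\,dx=\frac{\lambda^n\, e^{(\lambda+s)\epsilon}}{\left(s\,e^{(\lambda+s)\epsilon}+\lambda\right)^{n+1}}.$$
   Context: A cluster is a maximal set of consecutive points $X_j,\dots,X_k$ with $X_{l+1}-X_l\le\epsilon$ for $j\le l<k$. Clusters are numbered from left to right; the end of the $i$-th cluster is $E_i=X_k+\epsilon$, where $X_k$ is its last point. The number of (complete) clusters in $[0,x]$ is $\beta_0(x)=\#\{i\ge1: E_i\le x\}$. *)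

theory Defs
  imports "HOL-Probability.Probability"
begin

text \<open>Points of the process built from inter-arrival times T 0, T 1, ...:
  pp_point T k = X_k = T 0 + ... + T (k-1), so X_1 = T 0 and X_(k+1) - X_k = T k.\<close>
definition pp_point :: "(nat \<Rightarrow> real) \<Rightarrow> nat \<Rightarrow> real" where
  "pp_point T k = (\<Sum>i<k. T i)"

text \<open>Point X_k (k >= 1) is the last point of a cluster iff the next gap exceeds eps;
  the end of that cluster is then X_k + eps.\<close>
definition is_cluster_last :: "real \<Rightarrow> (nat \<Rightarrow> real) \<Rightarrow> nat \<Rightarrow> bool" where
  "is_cluster_last eps X k \<longleftrightarrow> 1 \<le> k \<and> X (Suc k) - X k > eps"

definition beta0 :: "real \<Rightarrow> (nat \<Rightarrow> real) \<Rightarrow> real \<Rightarrow> nat" where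
  "beta0 eps X x = card {k. is_cluster_last eps X k \<and> X k + eps \<le> x}"

end

theory Submission
  imports Defs
begin

text \<open>
  Let T_0, T_1, ... be the i.i.d. exponential gaps, so X_k = T_0 + ... + T_(k-1). The point X_k ends
  the (m+1)-th cluster iff T_k > eps and exactly m of T_1, ..., T_(k-1) exceed eps; so
  beta_0(x) \<ge> m + 1 iff some such X_k has X_k + eps \<le> x, and the Laplace transform of
  P(beta_0(x) \<ge> m + 1) is 1/s times the sum over k of E[exp(-s (X_k + eps)); X_k ends cluster m+1].
  Expanding this event over the set of long gaps and using independence, the k-th term is
  C(k-1, m) b^(m+1) a^(k-1-m), where b and a are the Laplace transforms of a gap restricted to
  T > eps and to T \<le> eps. The negative binomial series sums these to (b / (1 - a))^(m+1) / s, and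
  b / (1 - a) = lam / (s exp((lam + s) eps) + lam). Finally p_n is the difference of consecutive tails.
\<close>

lemma prod_of_bool_iff_mem:
  assumes "finite J" and "F \<subseteq> J"
  shows "(\<Prod>j\<in>J. of_bool (P j \<longleftrightarrow> j \<in> F) :: 'b::comm_semiring_1) = of_bool (F = {j\<in>J. P j})"
proof (cases "F = {j\<in>J. P j}")
  case True
  then show ?thesis by (auto intro: prod.neutral)
next
  case False
  then obtain j where "j \<in> J" "P j \<noteq> (j \<in> F)"
    using assms(2) by blast
  then have "(\<Prod>j\<in>J. of_bool (P j \<longleftrightarrow> j \<in> F) :: 'b) = 0"
    using assms(1) by (intro prod_zero) auto
  with False show ?thesis by simp
qed

lemma of_bool_card_eq_sum_prod:
  assumes "finite J"
  shows "(of_bool (card {j\<in>J. P j} = m) :: 'b::comm_semiring_1)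
    = (\<Sum>F | F \<subseteq> J \<and> card F = m. \<Prod>j\<in>J. of_bool (P j \<longleftrightarrow> j \<in> F))"
proof -
  have "finite {F. F \<subseteq> J \<and> card F = m}"
    using assms by (rule rev_finite_subset[OF finite_Pow_iff[THEN iffD2]]) auto
  then have "(\<Sum>F | F \<subseteq> J \<and> card F = m. of_bool (F = {j\<in>J. P j}) :: 'b)
      = of_bool (card {j\<in>J. P j} = m)"
    by (simp add: of_bool_def sum.delta')
  then show ?thesis
    using assms by (simp add: prod_of_bool_iff_mem)
qed

lemma prod_if_mem_subset:
  assumes "finite A" and "F \<subseteq> A"
  shows "(\<Prod>i\<in>A. if i \<in> F then b else a) = b ^ card F * (a :: 'b::comm_monoid_mult) ^ (card A - card F)"
proof -
  have "A \<inter> F = F" and "A \<inter> - F = A - F"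
    using assms(2) by blast+
  then show ?thesis
    using assms by (simp add: prod.If_cases card_Diff_subset finite_subset)
qed

lemma negative_binomial_sums:
  fixes z :: real
  assumes "0 \<le> z" and "z < 1"
  shows "(\<lambda>j. real ((j + m) choose m) * z ^ j) sums (1 / (1 - z) ^ Suc m)"
proof -
  have "\<bar>- z\<bar> < 1" using assms by simp
  from gen_binomial_real[OF this, of "- real (Suc m)"]
  have "(\<lambda>j. (- real (Suc m) gchoose j) * (- z) ^ j) sums (1 - z) powr (- real (Suc m))"
    by (simp only: diff_conv_add_uminus)
  also have "(\<lambda>j. (- real (Suc m) gchoose j) * (- z) ^ j) = (\<lambda>j. real ((j + m) choose m) * z ^ j)"
  proof
    fix j
    have "- real (Suc m) gchoose j = (-1) ^ j * (real (j + m) gchoose j)"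
      by (subst gbinomial_negated_upper) (simp add: algebra_simps)
    also have "real (j + m) gchoose j = real ((j + m) choose j)"
      by (simp only: binomial_gbinomial)
    also have "(j + m) choose j = (j + m) choose m"
      using binomial_symmetric[of j "j + m"] by simp
    finally show "(- real (Suc m) gchoose j) * (- z) ^ j = real ((j + m) choose m) * z ^ j"
      by (simp add: power_minus[of z])
  qed
  also have "(1 - z) powr (- real (Suc m)) = inverse ((1 - z) powr real (Suc m))"
    by (rule powr_minus)
  also have "(1 - z) powr real (Suc m) = (1 - z) ^ Suc m"
    using assms by (subst powr_realpow) auto
  finally show ?thesis
    by (simp only: inverse_eq_divide)
qed

lemma power_div_diff_power_Suc_div:
  fixes lam s c :: real
  assumes "0 < s" and "0 < s * c + lam"
  shows "(lam / (s * c + lam)) ^ n / s - (lam / (s * c + lam)) ^ Suc n / s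
    = lam ^ n * c / (s * c + lam) ^ (n + 1)"
proof -
  define D where "D = s * c + lam"
  have "0 < D"
    using assms(2) by (simp add: D_def)
  have "(lam / D) ^ n / s - (lam / D) ^ Suc n / s = (lam / D) ^ n * (1 - lam / D) / s"
    by (simp add: algebra_simps diff_divide_distrib)
  also have "1 - lam / D = s * c / D"
    using assms(2) by (simp add: D_def field_simps)
  also have "(lam / D) ^ n * (s * c / D) / s = lam ^ n * c / D ^ (n + 1)"
    using assms(1) \<open>0 < D\<close> by (simp add: power_divide field_simps)
  finally show ?thesis
    unfolding D_def .
qed

section \<open>Clusters of a sequence of gaps\<close>

lemma pp_point_Suc: "pp_point t (Suc k) = pp_point t k + t k"
  by (simp add: pp_point_def)

lemma pp_point_mono:
  assumes "\<And>i. 0 \<le> t i" and "j \<le> k"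
  shows "pp_point t j \<le> pp_point t k"
  unfolding pp_point_def using assms by (intro sum_mono2) auto

lemma pp_point_nonneg: "(\<And>i. 0 \<le> t i) \<Longrightarrow> 0 \<le> pp_point t k"
  unfolding pp_point_def by (intro sum_nonneg) auto

lemma is_cluster_last_pp_point_iff:
  "is_cluster_last e (pp_point t) k \<longleftrightarrow> 1 \<le> k \<and> e < t k"
  by (simp add: is_cluster_last_def pp_point_Suc)

definition clusters_before :: "real \<Rightarrow> (nat \<Rightarrow> real) \<Rightarrow> nat \<Rightarrow> nat" where
  "clusters_before e t k = card {j \<in> {1..<k}. e < t j}"

text \<open>The point X_k is the last point of cluster number m + 1.\<close>
definition ends_cluster :: "real \<Rightarrow> (nat \<Rightarrow> real) \<Rightarrow> nat \<Rightarrow> nat \<Rightarrow> bool" where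
  "ends_cluster e t m k \<longleftrightarrow> 1 \<le> k \<and> e < t k \<and> clusters_before e t k = m"

lemma clusters_before_Suc:
  "clusters_before e t (Suc k) = clusters_before e t k + of_bool (1 \<le> k \<and> e < t k)"
proof -
  have "{j \<in> {1..<Suc k}. e < t j} = {j \<in> {1..<k}. e < t j} \<union> (if 1 \<le> k \<and> e < t k then {k} else {})"
    by (auto simp: less_Suc_eq)
  then show ?thesis
    unfolding clusters_before_def by (auto simp: card_insert_if)
qed

lemma clusters_before_mono: "k \<le> k' \<Longrightarrow> clusters_before e t k \<le> clusters_before e t k'"
  unfolding clusters_before_def by (intro card_mono) auto

lemma ends_cluster_less:
  assumes "ends_cluster e t m k"
  shows "m < k"
proof -
  have "clusters_before e t k \<le> card {1..<k}"
    unfolding clusters_before_def by (intro card_mono) auto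
  with assms show ?thesis
    by (auto simp: ends_cluster_def)
qed

lemma ends_cluster_unique:
  assumes "ends_cluster e t m k" and "ends_cluster e t m k'"
  shows "k = k'"
proof (rule ccontr)
  assume "k \<noteq> k'"
  then consider "k < k'" | "k' < k" by linarith
  then show False
  proof cases
    case 1
    then have "clusters_before e t (Suc k) \<le> clusters_before e t k'"
      by (intro clusters_before_mono) simp
    with assms show False by (simp add: ends_cluster_def clusters_before_Suc)
  next
    case 2
    then have "clusters_before e t (Suc k') \<le> clusters_before e t k"
      by (intro clusters_before_mono) simp
    with assms show False by (simp add: ends_cluster_def clusters_before_Suc)
  qed
qed

lemma ends_cluster_if_Suc_le_clusters_before:
  "Suc m \<le> clusters_before e t k' \<Longrightarrow> \<exists>k<k'. ends_cluster e t m k"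
proof (induction k')
  case 0
  then show ?case by (simp add: clusters_before_def)
next
  case (Suc k')
  show ?case
  proof (cases "Suc m \<le> clusters_before e t k'")
    case True
    with Suc.IH show ?thesis using less_Suc_eq by blast
  next
    case False
    with Suc.prems have "ends_cluster e t m k'"
      by (auto simp: ends_cluster_def clusters_before_Suc of_bool_def split: if_splits)
    then show ?thesis by blast
  qed
qed

lemma finite_long_gaps_before:
  assumes "\<And>i. 0 \<le> t i" and "0 < e"
  shows "finite {k. e < t k \<and> pp_point t k + e \<le> x}"
proof (cases "finite {k. e < t k}")
  case True
  then show ?thesis by (rule rev_finite_subset) auto
next
  case False
  define N where "N = nat \<lceil>x / e\<rceil>"
  have "x / e \<le> real N"
    unfolding N_def by (rule real_nat_ceiling_ge)
  then have N: "x \<le> real N * e"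
    using \<open>0 < e\<close> by (simp add: pos_divide_le_eq)
  obtain F where F: "F \<subseteq> {k. e < t k}" "finite F" "card F = N"
    using infinite_arbitrarily_large[OF False] by blast
  have "x < pp_point t k + e" if "Suc (Max (insert 0 F)) \<le> k" for k
  proof -
    have "F \<subseteq> {..<k}"
    proof
      fix i assume "i \<in> F"
      then have "i \<le> Max (insert 0 F)" using F(2) by simp
      with that show "i \<in> {..<k}" by simp
    qed
    have "real N * e = (\<Sum>i\<in>F. e)" using F by simp
    also have "\<dots> \<le> (\<Sum>i\<in>F. t i)" using F(1) by (intro sum_mono) auto
    also have "\<dots> \<le> pp_point t k"
      unfolding pp_point_def using \<open>F \<subseteq> {..<k}\<close> assms(1) by (intro sum_mono2) auto
    finally show ?thesis using N \<open>0 < e\<close> by linarith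
  qed
  then have "{k. e < t k \<and> pp_point t k + e \<le> x} \<subseteq> {..<Suc (Max (insert 0 F))}"
    by (force simp: not_less[symmetric])
  then show ?thesis by (rule finite_subset) simp
qed

lemma beta0_pp_point:
  "beta0 e (pp_point t) x = card {k. 1 \<le> k \<and> e < t k \<and> pp_point t k + e \<le> x}"
  unfolding beta0_def is_cluster_last_pp_point_iff by (simp add: conj_assoc)

lemma beta0_mono:
  assumes "\<And>i. 0 \<le> t i" and "0 < e" and "x \<le> y"
  shows "beta0 e (pp_point t) x \<le> beta0 e (pp_point t) y"
proof -
  have "finite {k. 1 \<le> k \<and> e < t k \<and> pp_point t k + e \<le> y}"
    using finite_long_gaps_before[OF assms(1,2)] by (rule rev_finite_subset) auto
  then show ?thesis
    unfolding beta0_pp_point by (rule card_mono) (use \<open>x \<le> y\<close> in auto)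
qed

lemma Suc_le_beta0_iff:
  assumes nonneg: "\<And>i. 0 \<le> t i" and "0 < e"
  shows "Suc m \<le> beta0 e (pp_point t) x \<longleftrightarrow> (\<exists>k. ends_cluster e t m k \<and> pp_point t k + e \<le> x)"
proof -
  define S where "S = {k. 1 \<le> k \<and> e < t k \<and> pp_point t k + e \<le> x}"
  have "finite S"
    unfolding S_def using finite_long_gaps_before[OF assms] by (rule rev_finite_subset) auto
  show ?thesis
    unfolding beta0_pp_point S_def[symmetric]
  proof
    assume m: "Suc m \<le> card S"
    then have "S \<noteq> {}" by auto
    define K where "K = Max S"
    have "K \<in> S"
      using \<open>finite S\<close> \<open>S \<noteq> {}\<close> by (simp add: K_def)
    have "S \<subseteq> {j \<in> {1..<Suc K}. e < t j}"
      using \<open>finite S\<close> by (auto simp: K_def S_def less_Suc_eq_le)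
    then have "card S \<le> clusters_before e t (Suc K)"
      unfolding clusters_before_def by (intro card_mono) auto
    with m obtain k where "k < Suc K" "ends_cluster e t m k"
      using ends_cluster_if_Suc_le_clusters_before by (meson le_trans)
    moreover have "pp_point t k \<le> pp_point t K"
      using \<open>k < Suc K\<close> by (intro pp_point_mono nonneg) simp
    ultimately show "\<exists>k. ends_cluster e t m k \<and> pp_point t k + e \<le> x"
      using \<open>K \<in> S\<close> by (auto simp: S_def)
  next
    assume "\<exists>k. ends_cluster e t m k \<and> pp_point t k + e \<le> x"
    then obtain k where k: "ends_cluster e t m k" "pp_point t k + e \<le> x" by blast
    have "pp_point t j \<le> pp_point t k" if "j \<le> k" for j
      using nonneg that by (rule pp_point_mono)
    then have "pp_point t j + e \<le> x" if "j \<le> k" for j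
      using k(2) that by (meson add_right_mono order_trans)
    then have "insert k {j \<in> {1..<k}. e < t j} \<subseteq> S"
      using k(1) by (auto simp: S_def ends_cluster_def)
    then have "card (insert k {j \<in> {1..<k}. e < t j}) \<le> card S"
      using \<open>finite S\<close> by (rule card_mono[rotated])
    with k(1) show "Suc m \<le> card S"
      by (simp add: ends_cluster_def clusters_before_def)
  qed
qed

text \<open>Expanding the indicator of exactly m long gaps over the set F of long gaps turns the weight of
  the event into a sum of products of functions of single gaps, to which independence applies.\<close>
definition ends_cluster_factor :: "real \<Rightarrow> real \<Rightarrow> nat set \<Rightarrow> nat \<Rightarrow> nat \<Rightarrow> real \<Rightarrow> real" where
  "ends_cluster_factor e s F k i t =
    (if i = k then of_bool (e < t) * exp (- s * e)
     else exp (- s * t) * (if i = 0 then 1 else of_bool (e < t \<longleftrightarrow> i \<in> F)))"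

lemma ends_cluster_factor_nonneg: "0 \<le> ends_cluster_factor e s F k i t"
  by (simp add: ends_cluster_factor_def)

lemma measurable_ends_cluster_factor [measurable]:
  "ends_cluster_factor e s F k i \<in> borel_measurable borel"
  unfolding ends_cluster_factor_def by measurable

lemma ends_cluster_exp_eq_sum_prod:
  assumes "1 \<le> k"
  shows "of_bool (ends_cluster e t m k) * exp (- s * (pp_point t k + e))
    = (\<Sum>F | F \<subseteq> {1..<k} \<and> card F = m. \<Prod>i\<le>k. ends_cluster_factor e s F k i (t i))"
proof -
  have "{..<k} = insert 0 {1..<k}"
    using assms by auto
  then have "(\<Prod>i<k. ends_cluster_factor e s F k i (t i))
      = (\<Prod>i<k. exp (- s * t i)) * (\<Prod>j\<in>{1..<k}. of_bool (e < t j \<longleftrightarrow> j \<in> F))" for F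
    using assms by (simp add: ends_cluster_factor_def prod.distrib)
  moreover have "(\<Prod>i<k. exp (- s * t i)) = exp (- s * pp_point t k)"
    by (simp add: pp_point_def sum_distrib_left exp_sum)
  moreover have "exp (- s * (pp_point t k + e)) = exp (- s * pp_point t k) * exp (- s * e)"
    by (simp add: algebra_simps flip: exp_add)
  ultimately have prod: "(\<Prod>i\<le>k. ends_cluster_factor e s F k i (t i))
      = of_bool (e < t k) * exp (- s * (pp_point t k + e)) * (\<Prod>j\<in>{1..<k}. of_bool (e < t j \<longleftrightarrow> j \<in> F))"
    for F
    by (simp add: lessThan_Suc_atMost[symmetric] ends_cluster_factor_def[of _ _ _ k k] mult_ac)
  show ?thesis
    unfolding prod sum_distrib_left[symmetric] of_bool_card_eq_sum_prod[OF finite_atLeastLessThan, symmetric]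
    using assms by (simp add: ends_cluster_def clusters_before_def)
qed

section \<open>Laplace transforms\<close>

lemma nn_integral_laplace_ge:
  fixes s y :: real
  assumes "0 < s" and "0 \<le> y"
  shows "(\<integral>\<^sup>+x. ennreal (exp (- s * x) * indicator {0..} x) * of_bool (y \<le> x) \<partial>lborel)
    = ennreal (exp (- s * y) / s)"
proof -
  have "(\<integral>\<^sup>+x. ennreal (exp (- s * x) * indicator {0..} x) * of_bool (y \<le> x) \<partial>lborel)
      = (\<integral>\<^sup>+x. ennreal (indicator {y..} x * exp (- s * x)) \<partial>lborel)"
    using assms(2) by (intro nn_integral_cong) (auto simp: indicator_def)
  also have "\<dots> = ennreal (exp (- s * y) / s)"
    using has_integral_exp_minus_to_infinity[OF assms(1)]
    by (rule nn_integral_has_integral_lebesgue[rotated]) simp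
  finally show ?thesis .
qed

lemma (in sigma_finite_measure) nn_integral_laplace_emeasure_ex_le:
  fixes Y :: "nat \<Rightarrow> 'a \<Rightarrow> real"
  assumes [measurable]: "\<And>j. Y j \<in> borel_measurable M" "\<And>j. Measurable.pred M (P j)"
    and nonneg: "\<And>j. AE \<omega> in M. 0 \<le> Y j \<omega>"
    and unique: "\<And>\<omega> i j. P i \<omega> \<Longrightarrow> P j \<omega> \<Longrightarrow> i = j"
    and "0 < s"
  shows "(\<integral>\<^sup>+x. ennreal (exp (- s * x) * indicator {0..} x) *
      emeasure M {\<omega>\<in>space M. \<exists>j. P j \<omega> \<and> Y j \<omega> \<le> x} \<partial>lborel)
    = (\<Sum>j. (\<integral>\<^sup>+\<omega>. ennreal (of_bool (P j \<omega>) * exp (- s * Y j \<omega>)) \<partial>M) / ennreal s)"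
proof -
  let ?w = "\<lambda>x. ennreal (exp (- s * x) * indicator {0..} x)"
  have "emeasure M {\<omega>\<in>space M. \<exists>j. P j \<omega> \<and> Y j \<omega> \<le> x}
      = (\<Sum>j. \<integral>\<^sup>+\<omega>. of_bool (P j \<omega> \<and> Y j \<omega> \<le> x) \<partial>M)" for x
  proof -
    have Union: "{\<omega>\<in>space M. \<exists>j. P j \<omega> \<and> Y j \<omega> \<le> x}
        = (\<Union>j. {\<omega>\<in>space M. P j \<omega> \<and> Y j \<omega> \<le> x})"
      by blast
    have "disjoint_family (\<lambda>j. {\<omega>\<in>space M. P j \<omega> \<and> Y j \<omega> \<le> x})"
      using unique by (auto simp: disjoint_family_on_def)
    then have "emeasure M {\<omega>\<in>space M. \<exists>j. P j \<omega> \<and> Y j \<omega> \<le> x}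
        = (\<Sum>j. emeasure M {\<omega>\<in>space M. P j \<omega> \<and> Y j \<omega> \<le> x})"
      unfolding Union by (intro suminf_emeasure[symmetric]) auto
    also have "\<dots> = (\<Sum>j. \<integral>\<^sup>+\<omega>. of_bool (P j \<omega> \<and> Y j \<omega> \<le> x) \<partial>M)"
      by (intro suminf_cong) (auto simp flip: nn_integral_indicator simp: indicator_def intro!: nn_integral_cong)
    finally show ?thesis .
  qed
  then have "(\<integral>\<^sup>+x. ?w x * emeasure M {\<omega>\<in>space M. \<exists>j. P j \<omega> \<and> Y j \<omega> \<le> x} \<partial>lborel)
      = (\<integral>\<^sup>+x. (\<Sum>j. \<integral>\<^sup>+\<omega>. ?w x * of_bool (P j \<omega> \<and> Y j \<omega> \<le> x) \<partial>M) \<partial>lborel)"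
    by (simp add: nn_integral_cmult ennreal_suminf_cmult)
  also have "\<dots> = (\<Sum>j. \<integral>\<^sup>+x. \<integral>\<^sup>+\<omega>. ?w x * of_bool (P j \<omega> \<and> Y j \<omega> \<le> x) \<partial>M \<partial>lborel)"
    by (rule nn_integral_suminf) measurable
  also have "\<dots> = (\<Sum>j. \<integral>\<^sup>+\<omega>. \<integral>\<^sup>+x. ?w x * of_bool (P j \<omega> \<and> Y j \<omega> \<le> x) \<partial>lborel \<partial>M)"
  proof -
    interpret pair_sigma_finite M lborel
      by (simp add: pair_sigma_finite_def sigma_finite_measure_axioms sigma_finite_lborel)
    show ?thesis
      by (intro suminf_cong Fubini') measurable
  qed
  also have "\<dots> = (\<Sum>j. (\<integral>\<^sup>+\<omega>. ennreal (of_bool (P j \<omega>) * exp (- s * Y j \<omega>)) \<partial>M) / ennreal s)"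
  proof (intro suminf_cong)
    fix j
    have "AE \<omega> in M. (\<integral>\<^sup>+x. ?w x * of_bool (P j \<omega> \<and> Y j \<omega> \<le> x) \<partial>lborel)
        = ennreal (of_bool (P j \<omega>) * exp (- s * Y j \<omega>)) / ennreal s"
      using nonneg[of j]
    proof eventually_elim
      case (elim \<omega>)
      then show ?case
        using nn_integral_laplace_ge[OF \<open>0 < s\<close> elim] \<open>0 < s\<close>
        by (cases "P j \<omega>") (simp_all add: divide_ennreal)
    qed
    then show "(\<integral>\<^sup>+\<omega>. \<integral>\<^sup>+x. ?w x * of_bool (P j \<omega> \<and> Y j \<omega> \<le> x) \<partial>lborel \<partial>M)
        = (\<integral>\<^sup>+\<omega>. ennreal (of_bool (P j \<omega>) * exp (- s * Y j \<omega>)) \<partial>M) / ennreal s"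
      by (simp add: nn_integral_cong_AE nn_integral_divide)
  qed
  finally show ?thesis .
qed

context prob_space
begin

lemma exponential_distributed_AE_pos:
  assumes "distributed M lborel X (exponential_density l)" and "0 < l"
  shows "AE \<omega> in M. 0 < X \<omega>"
proof -
  have "AE \<omega> in M. \<omega> \<in> {\<omega>\<in>space M. 0 < X \<omega>}"
    using exponential_distributedD_gt[OF assms(1) order.refl assms(2)] by (intro AE_prob_1) simp
  then show ?thesis by eventually_elim simp
qed

lemma exponential_distributed_laplace_greaterThan:
  assumes X: "distributed M lborel X (exponential_density l)"
    and "0 < l" and "0 \<le> s" and "0 \<le> a"
  shows "(\<integral>\<^sup>+\<omega>. ennreal (exp (- s * X \<omega>) * of_bool (a < X \<omega>)) \<partial>M)
    = ennreal (l / (l + s) * exp (- (l + s) * a))"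
proof -
  have "(\<integral>\<^sup>+\<omega>. ennreal (exp (- s * X \<omega>) * of_bool (a < X \<omega>)) \<partial>M)
      = (\<integral>\<^sup>+t. ennreal (exponential_density l t) * ennreal (exp (- s * t) * of_bool (a < t)) \<partial>lborel)"
    using X by (rule distributed_nn_integral[symmetric]) measurable
  also have "\<dots> = (\<integral>\<^sup>+t. ennreal (indicator {a..} t * (l * exp (- (l + s) * t))) \<partial>lborel)"
    using AE_lborel_singleton[of a]
  proof (intro nn_integral_cong_AE, eventually_elim)
    case (elim t)
    then show ?case
      using assms(2-4) by (auto simp: indicator_def exponential_density_def algebra_simps
          simp flip: ennreal_mult exp_add)
  qed
  also have "\<dots> = ennreal (l / (l + s) * exp (- (l + s) * a))"
  proof -
    have "((\<lambda>t. l * exp (- (l + s) * t)) has_integral l * (exp (- (l + s) * a) / (l + s))) {a..}"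
      using assms by (intro has_integral_mult_right has_integral_exp_minus_to_infinity) simp
    then show ?thesis
      using assms by (subst nn_integral_has_integral_lebesgue) auto
  qed
  finally show ?thesis .
qed

lemma exponential_distributed_laplace:
  assumes X: "distributed M lborel X (exponential_density l)" and "0 < l" and "0 \<le> s"
  shows "(\<integral>\<^sup>+\<omega>. ennreal (exp (- s * X \<omega>)) \<partial>M) = ennreal (l / (l + s))"
proof -
  have "(\<integral>\<^sup>+\<omega>. ennreal (exp (- s * X \<omega>)) \<partial>M)
      = (\<integral>\<^sup>+\<omega>. ennreal (exp (- s * X \<omega>) * of_bool (0 < X \<omega>)) \<partial>M)"
    using exponential_distributed_AE_pos[OF X \<open>0 < l\<close>] by (intro nn_integral_cong_AE) auto
  also have "\<dots> = ennreal (l / (l + s))"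
    using exponential_distributed_laplace_greaterThan[OF assms, of 0] by simp
  finally show ?thesis .
qed

lemma exponential_distributed_laplace_atMost:
  assumes X: "distributed M lborel X (exponential_density l)"
    and "0 < l" and "0 \<le> s" and "0 \<le> a"
  shows "(\<integral>\<^sup>+\<omega>. ennreal (exp (- s * X \<omega>) * of_bool (X \<omega> \<le> a)) \<partial>M)
    = ennreal (l / (l + s) * (1 - exp (- (l + s) * a)))"
proof -
  have [measurable]: "X \<in> borel_measurable M"
    using distributed_measurable[OF X] by simp
  let ?L = "\<integral>\<^sup>+\<omega>. ennreal (exp (- s * X \<omega>) * of_bool (X \<omega> \<le> a)) \<partial>M"
  let ?c = "l / (l + s) * exp (- (l + s) * a)"
  have "ennreal (l / (l + s)) = (\<integral>\<^sup>+\<omega>. ennreal (exp (- s * X \<omega>) * of_bool (X \<omega> \<le> a))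
      + ennreal (exp (- s * X \<omega>) * of_bool (a < X \<omega>)) \<partial>M)"
    unfolding exponential_distributed_laplace[OF X assms(2,3), symmetric]
    by (intro nn_integral_cong) (auto simp: not_le)
  also have "\<dots> = ?L + ennreal ?c"
    using exponential_distributed_laplace_greaterThan[OF assms] by (subst nn_integral_add) auto
  finally have "?L = ennreal (l / (l + s)) - ennreal ?c"
    by (simp add: ennreal_add_diff_cancel_right)
  also have "\<dots> = ennreal (l / (l + s) * (1 - exp (- (l + s) * a)))"
    using assms by (subst ennreal_minus) (auto simp: algebra_simps mult_left_le_one_le)
  finally show ?thesis .
qed

end

section \<open>Clusters of a Poisson process\<close>

locale poisson_clusters = prob_space +
  fixes T :: "nat \<Rightarrow> 'a \<Rightarrow> real" and lam eps :: real
  assumes indep_T: "indep_vars (\<lambda>_. borel) T UNIV"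
    and distributed_T: "\<And>i. distributed M lborel (T i) (exponential_density lam)"
    and lam_pos: "0 < lam" and eps_pos: "0 < eps"
begin

lemma measurable_T [measurable]: "T i \<in> borel_measurable M"
  using distributed_measurable[OF distributed_T] by simp

lemma measurable_pp_point [measurable]: "(\<lambda>\<omega>. pp_point (\<lambda>i. T i \<omega>) k) \<in> borel_measurable M"
  unfolding pp_point_def by measurable

lemma AE_T_nonneg: "AE \<omega> in M. \<forall>i. 0 \<le> T i \<omega>"
proof -
  have "AE \<omega> in M. 0 \<le> T i \<omega>" for i
    using exponential_distributed_AE_pos[OF distributed_T lam_pos, of i] by eventually_elim simp
  then show ?thesis by (simp add: AE_all_countable)
qed

lemma nn_integral_prod_T:
  assumes "finite J" and [measurable]: "\<And>i. g i \<in> borel_measurable borel" and "\<And>i t. 0 \<le> g i t"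
  shows "(\<integral>\<^sup>+\<omega>. ennreal (\<Prod>i\<in>J. g i (T i \<omega>)) \<partial>M)
    = (\<Prod>i\<in>J. \<integral>\<^sup>+\<omega>. ennreal (g i (T i \<omega>)) \<partial>M)"
proof -
  have "indep_vars (\<lambda>_. borel) (\<lambda>i \<omega>. ennreal (g i (T i \<omega>))) J"
    by (rule indep_vars_compose2[OF indep_vars_subset[OF indep_T]]) auto
  then show ?thesis
    using assms by (simp add: prod_ennreal[symmetric] indep_vars_nn_integral)
qed

text \<open>The Laplace transforms E[exp(-s T); T > eps] and E[exp(-s T); T \<le> eps] of a gap: long gaps
  separate clusters, short gaps lie inside one.\<close>
definition laplace_long_gap :: "real \<Rightarrow> real" where
  "laplace_long_gap s = lam / (lam + s) * exp (- (lam + s) * eps)"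

definition laplace_short_gap :: "real \<Rightarrow> real" where
  "laplace_short_gap s = lam / (lam + s) * (1 - exp (- (lam + s) * eps))"

lemma laplace_gap_bounds:
  assumes "0 \<le> s"
  shows "0 \<le> laplace_long_gap s" and "0 \<le> laplace_short_gap s" and "laplace_short_gap s < 1"
proof -
  define E where "E = exp (- (lam + s) * eps)"
  have "0 < E" and "E \<le> 1"
    using assms lam_pos eps_pos by (simp_all add: E_def mult_nonpos_nonneg)
  moreover have "0 \<le> lam / (lam + s)" and "lam / (lam + s) \<le> 1"
    using assms lam_pos by simp_all
  ultimately have "laplace_short_gap s \<le> 1 - E"
    unfolding laplace_short_gap_def E_def[symmetric] by (intro mult_left_le_one_le) simp_all
  with \<open>0 < E\<close> show "laplace_short_gap s < 1" by simp
  show "0 \<le> laplace_long_gap s" and "0 \<le> laplace_short_gap s"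
    unfolding laplace_long_gap_def laplace_short_gap_def E_def[symmetric]
    using \<open>0 < E\<close> \<open>E \<le> 1\<close> assms lam_pos by (auto intro!: divide_nonneg_nonneg)
qed

lemma laplace_long_gap_div:
  assumes "0 < s"
  shows "laplace_long_gap s / (1 - laplace_short_gap s) = lam / (s * exp ((lam + s) * eps) + lam)"
proof -
  define E where "E = exp (- (lam + s) * eps)"
  have "0 < E" and inv_E: "exp ((lam + s) * eps) = 1 / E"
    unfolding E_def by (simp, metis exp_minus minus_mult_left inverse_eq_divide inverse_inverse_eq)
  have "0 < lam + s" and "0 < s + lam * E"
    using assms lam_pos \<open>0 < E\<close> by (simp_all add: add_pos_pos)
  have "1 - laplace_short_gap s = (s + lam * E) / (lam + s)"
    using \<open>0 < lam + s\<close> unfolding laplace_short_gap_def E_def[symmetric] by (simp add: field_simps)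
  then have "laplace_long_gap s / (1 - laplace_short_gap s) = lam * E / (s + lam * E)"
    using \<open>0 < lam + s\<close> unfolding laplace_long_gap_def E_def[symmetric] by simp
  also have "\<dots> = lam / (s * exp ((lam + s) * eps) + lam)"
    using \<open>0 < E\<close> \<open>0 < s + lam * E\<close> unfolding inv_E by (simp add: field_simps)
  finally show ?thesis .
qed

lemma nn_integral_ends_cluster_factor:
  assumes "0 \<le> s"
  shows "(\<integral>\<^sup>+\<omega>. ennreal (ends_cluster_factor eps s F k i (T i \<omega>)) \<partial>M)
    = ennreal (if i = k then exp (- (lam + s) * eps) else if i = 0 then lam / (lam + s)
        else if i \<in> F then laplace_long_gap s else laplace_short_gap s)"
proof -
  consider "i = k" | "i \<noteq> k" "i = 0" | "i \<noteq> k" "i \<noteq> 0" "i \<in> F" | "i \<noteq> k" "i \<noteq> 0" "i \<notin> F"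
    by blast
  then show ?thesis
  proof cases
    case 1
    have "(\<integral>\<^sup>+\<omega>. ennreal (of_bool (eps < T i \<omega>) * exp (- s * eps)) \<partial>M)
        = (\<integral>\<^sup>+\<omega>. ennreal (exp (- 0 * T i \<omega>) * of_bool (eps < T i \<omega>)) \<partial>M) * ennreal (exp (- s * eps))"
      by (subst nn_integral_multc[symmetric]) (auto simp: ennreal_mult'[symmetric] intro!: nn_integral_cong)
    also have "\<dots> = ennreal (exp (- (lam + s) * eps))"
      using exponential_distributed_laplace_greaterThan[OF distributed_T lam_pos order.refl, of eps] eps_pos lam_pos
      by (simp add: ennreal_mult'[symmetric] exp_add[symmetric] algebra_simps)
    finally show ?thesis
      using 1 by (simp add: ends_cluster_factor_def)
  next
    case 2
    then show ?thesis
      using exponential_distributed_laplace[OF distributed_T lam_pos assms]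
      by (simp add: ends_cluster_factor_def)
  next
    case 3
    then show ?thesis
      using exponential_distributed_laplace_greaterThan[OF distributed_T lam_pos assms, of eps] eps_pos
      by (simp add: ends_cluster_factor_def laplace_long_gap_def)
  next
    case 4
    then show ?thesis
      using exponential_distributed_laplace_atMost[OF distributed_T lam_pos assms, of eps] eps_pos
      by (simp add: ends_cluster_factor_def laplace_short_gap_def not_less)
  qed
qed

lemma nn_integral_prod_ends_cluster_factor:
  assumes "0 \<le> s" and "1 \<le> k" and "F \<subseteq> {1..<k}"
  shows "(\<integral>\<^sup>+\<omega>. ennreal (\<Prod>i\<le>k. ends_cluster_factor eps s F k i (T i \<omega>)) \<partial>M)
    = ennreal (laplace_long_gap s ^ Suc (card F) * laplace_short_gap s ^ (k - 1 - card F))"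
proof -
  let ?c = "\<lambda>i. if i = k then exp (- (lam + s) * eps) else if i = 0 then lam / (lam + s)
    else if i \<in> F then laplace_long_gap s else laplace_short_gap s"
  have "(\<integral>\<^sup>+\<omega>. ennreal (\<Prod>i\<le>k. ends_cluster_factor eps s F k i (T i \<omega>)) \<partial>M)
      = (\<Prod>i\<le>k. \<integral>\<^sup>+\<omega>. ennreal (ends_cluster_factor eps s F k i (T i \<omega>)) \<partial>M)"
    by (rule nn_integral_prod_T) (simp_all add: ends_cluster_factor_nonneg)
  also have "\<dots> = ennreal (\<Prod>i\<le>k. ?c i)"
    using laplace_gap_bounds[OF assms(1)] assms(1) lam_pos
    by (simp add: nn_integral_ends_cluster_factor[OF assms(1)] prod_ennreal)
  also have "{..k} = insert k (insert 0 {1..<k})"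
    using assms(2) by auto
  then have "(\<Prod>i\<le>k. ?c i) = exp (- (lam + s) * eps) * (lam / (lam + s))
      * (\<Prod>i\<in>{1..<k}. if i \<in> F then laplace_long_gap s else laplace_short_gap s)"
    using assms(2) by simp
  also have "\<dots> = laplace_long_gap s ^ Suc (card F) * laplace_short_gap s ^ (k - 1 - card F)"
    using assms(3) by (simp add: prod_if_mem_subset laplace_long_gap_def mult_ac)
  finally show ?thesis .
qed

lemma nn_integral_ends_cluster_exp:
  assumes "0 \<le> s"
  shows "(\<integral>\<^sup>+\<omega>. ennreal (of_bool (ends_cluster eps (\<lambda>i. T i \<omega>) m (j + m + 1))
      * exp (- s * (pp_point (\<lambda>i. T i \<omega>) (j + m + 1) + eps))) \<partial>M)
    = ennreal (real ((j + m) choose m) * laplace_long_gap s ^ Suc m * laplace_short_gap s ^ j)"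
proof -
  define k where "k = j + m + 1"
  let ?Fs = "{F. F \<subseteq> {1..<k} \<and> card F = m}"
  have "1 \<le> k"
    by (simp add: k_def)
  have "ennreal (of_bool (ends_cluster eps (\<lambda>i. T i \<omega>) m k) * exp (- s * (pp_point (\<lambda>i. T i \<omega>) k + eps)))
      = (\<Sum>F\<in>?Fs. ennreal (\<Prod>i\<le>k. ends_cluster_factor eps s F k i (T i \<omega>)))" for \<omega>
    unfolding ends_cluster_exp_eq_sum_prod[OF \<open>1 \<le> k\<close>]
    by (rule sum_ennreal[symmetric]) (simp add: prod_nonneg ends_cluster_factor_nonneg)
  then have "(\<integral>\<^sup>+\<omega>. ennreal (of_bool (ends_cluster eps (\<lambda>i. T i \<omega>) m k)
        * exp (- s * (pp_point (\<lambda>i. T i \<omega>) k + eps))) \<partial>M)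
      = (\<Sum>F\<in>?Fs. \<integral>\<^sup>+\<omega>. ennreal (\<Prod>i\<le>k. ends_cluster_factor eps s F k i (T i \<omega>)) \<partial>M)"
    by (simp add: nn_integral_sum del: sum_ennreal)
  also have "\<dots> = (\<Sum>F\<in>?Fs. ennreal (laplace_long_gap s ^ Suc m * laplace_short_gap s ^ j))"
  proof (intro sum.cong refl)
    fix F assume "F \<in> ?Fs"
    moreover have "k - 1 - m = j"
      by (simp add: k_def)
    ultimately show "(\<integral>\<^sup>+\<omega>. ennreal (\<Prod>i\<le>k. ends_cluster_factor eps s F k i (T i \<omega>)) \<partial>M)
        = ennreal (laplace_long_gap s ^ Suc m * laplace_short_gap s ^ j)"
      using nn_integral_prod_ends_cluster_factor[OF assms \<open>1 \<le> k\<close>, of F] by simp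
  qed
  also have "\<dots> = ennreal (real ((j + m) choose m) * laplace_long_gap s ^ Suc m * laplace_short_gap s ^ j)"
    using laplace_gap_bounds[OF assms]
    by (simp add: n_subsets k_def ennreal_of_nat_eq_real_of_nat ennreal_mult mult.assoc)
  finally show ?thesis
    by (simp add: k_def)
qed

lemma sets_beta0_eq [measurable]:
  "{\<omega>\<in>space M. beta0 eps (pp_point (\<lambda>i. T i \<omega>)) x = n} \<in> sets M"
  unfolding beta0_def is_cluster_last_def by measurable

lemma sets_le_beta0 [measurable]:
  "{\<omega>\<in>space M. n \<le> beta0 eps (pp_point (\<lambda>i. T i \<omega>)) x} \<in> sets M"
proof -
  have "{\<omega>\<in>space M. n \<le> beta0 eps (pp_point (\<lambda>i. T i \<omega>)) x}
      = space M - (\<Union>i<n. {\<omega>\<in>space M. beta0 eps (pp_point (\<lambda>i. T i \<omega>)) x = i})"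
    by auto
  then show ?thesis by simp
qed

lemma measurable_ends_cluster [measurable]:
  "Measurable.pred M (\<lambda>\<omega>. ends_cluster eps (\<lambda>i. T i \<omega>) m k)"
  unfolding ends_cluster_def clusters_before_def by measurable

lemma emeasure_Suc_le_beta0:
  "emeasure M {\<omega>\<in>space M. Suc m \<le> beta0 eps (pp_point (\<lambda>i. T i \<omega>)) x}
    = emeasure M {\<omega>\<in>space M. \<exists>j. ends_cluster eps (\<lambda>i. T i \<omega>) m (j + m + 1)
        \<and> pp_point (\<lambda>i. T i \<omega>) (j + m + 1) + eps \<le> x}"
proof (rule emeasure_eq_AE)
  show "AE \<omega> in M. \<omega> \<in> {\<omega>\<in>space M. Suc m \<le> beta0 eps (pp_point (\<lambda>i. T i \<omega>)) x}
    \<longleftrightarrow> \<omega> \<in> {\<omega>\<in>space M. \<exists>j. ends_cluster eps (\<lambda>i. T i \<omega>) m (j + m + 1)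
        \<and> pp_point (\<lambda>i. T i \<omega>) (j + m + 1) + eps \<le> x}"
    using AE_T_nonneg
  proof eventually_elim
    case (elim \<omega>)
    let ?t = "\<lambda>i. T i \<omega>"
    have "Suc m \<le> beta0 eps (pp_point ?t) x
        \<longleftrightarrow> (\<exists>k. ends_cluster eps ?t m k \<and> pp_point ?t k + eps \<le> x)"
      by (rule Suc_le_beta0_iff) (use elim eps_pos in auto)
    also have "\<dots> \<longleftrightarrow> (\<exists>j. ends_cluster eps ?t m (j + m + 1) \<and> pp_point ?t (j + m + 1) + eps \<le> x)"
    proof
      assume "\<exists>k. ends_cluster eps ?t m k \<and> pp_point ?t k + eps \<le> x"
      then obtain k where k: "ends_cluster eps ?t m k" "pp_point ?t k + eps \<le> x"
        by blast
      moreover have "k = (k - m - 1) + m + 1"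
        using ends_cluster_less[OF k(1)] by simp
      ultimately show "\<exists>j. ends_cluster eps ?t m (j + m + 1) \<and> pp_point ?t (j + m + 1) + eps \<le> x"
        by (intro exI[of _ "k - m - 1"]) simp
    qed blast
    finally show ?case by simp
  qed
qed measurable

lemma nn_integral_laplace_Suc_le_beta0:
  assumes "0 < s"
  shows "(\<integral>\<^sup>+x. ennreal (exp (- s * x) * indicator {0..} x) *
      emeasure M {\<omega>\<in>space M. Suc m \<le> beta0 eps (pp_point (\<lambda>i. T i \<omega>)) x} \<partial>lborel)
    = ennreal ((lam / (s * exp ((lam + s) * eps) + lam)) ^ Suc m / s)"
proof -
  let ?k = "\<lambda>j. j + m + 1"
  have "(\<integral>\<^sup>+x. ennreal (exp (- s * x) * indicator {0..} x) *
      emeasure M {\<omega>\<in>space M. Suc m \<le> beta0 eps (pp_point (\<lambda>i. T i \<omega>)) x} \<partial>lborel)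
    = (\<Sum>j. (\<integral>\<^sup>+\<omega>. ennreal (of_bool (ends_cluster eps (\<lambda>i. T i \<omega>) m (?k j))
        * exp (- s * (pp_point (\<lambda>i. T i \<omega>) (?k j) + eps))) \<partial>M) / ennreal s)"
    unfolding emeasure_Suc_le_beta0
  proof (rule nn_integral_laplace_emeasure_ex_le)
    show "AE \<omega> in M. 0 \<le> pp_point (\<lambda>i. T i \<omega>) (?k j) + eps" for j
      using AE_T_nonneg by eventually_elim (simp add: pp_point_nonneg eps_pos add_nonneg_pos less_imp_le)
    show "i = j" if "ends_cluster eps (\<lambda>i. T i \<omega>) m (?k i)" "ends_cluster eps (\<lambda>i. T i \<omega>) m (?k j)"
      for \<omega> i j
      using ends_cluster_unique[OF that] by simp
  qed (use assms in simp_all)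
  also have "\<dots> = (\<Sum>j. ennreal (real ((j + m) choose m) * laplace_long_gap s ^ Suc m * laplace_short_gap s ^ j / s))"
    unfolding nn_integral_ends_cluster_exp[OF less_imp_le[OF assms]]
    using assms laplace_gap_bounds[of s] by (intro suminf_cong divide_ennreal) auto
  also have "\<dots> = ennreal (laplace_long_gap s ^ Suc m * (1 / (1 - laplace_short_gap s) ^ Suc m) / s)"
  proof (rule suminf_ennreal_eq)
    have "(\<lambda>j. laplace_long_gap s ^ Suc m * (real ((j + m) choose m) * laplace_short_gap s ^ j) / s)
        sums (laplace_long_gap s ^ Suc m * (1 / (1 - laplace_short_gap s) ^ Suc m) / s)"
      using laplace_gap_bounds[of s] assms by (intro sums_divide sums_mult negative_binomial_sums) auto
    then show "(\<lambda>j. real ((j + m) choose m) * laplace_long_gap s ^ Suc m * laplace_short_gap s ^ j / s)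
        sums (laplace_long_gap s ^ Suc m * (1 / (1 - laplace_short_gap s) ^ Suc m) / s)"
      by (simp add: mult_ac)
  qed (use assms laplace_gap_bounds[of s] in auto)
  also have "laplace_long_gap s ^ Suc m * (1 / (1 - laplace_short_gap s) ^ Suc m)
      = (laplace_long_gap s / (1 - laplace_short_gap s)) ^ Suc m"
    by (simp add: power_divide)
  also note laplace_long_gap_div[OF assms]
  finally show ?thesis .
qed

lemma prob_beta0_eq:
  "prob {\<omega>\<in>space M. beta0 eps (pp_point (\<lambda>i. T i \<omega>)) x = n}
    = prob {\<omega>\<in>space M. n \<le> beta0 eps (pp_point (\<lambda>i. T i \<omega>)) x}
      - prob {\<omega>\<in>space M. Suc n \<le> beta0 eps (pp_point (\<lambda>i. T i \<omega>)) x}"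
proof -
  have "{\<omega>\<in>space M. beta0 eps (pp_point (\<lambda>i. T i \<omega>)) x = n}
      = {\<omega>\<in>space M. n \<le> beta0 eps (pp_point (\<lambda>i. T i \<omega>)) x}
        - {\<omega>\<in>space M. Suc n \<le> beta0 eps (pp_point (\<lambda>i. T i \<omega>)) x}"
    by auto
  then show ?thesis
    by (simp add: finite_measure_Diff subset_eq)
qed

lemma has_integral_laplace_le_beta0:
  assumes "0 < s"
  shows "((\<lambda>x. exp (- s * x) * prob {\<omega>\<in>space M. n \<le> beta0 eps (pp_point (\<lambda>i. T i \<omega>)) x})
    has_integral (lam / (s * exp ((lam + s) * eps) + lam)) ^ n / s) {0..}"
proof (cases n)
  case 0
  then show ?thesis
    using has_integral_exp_minus_to_infinity[OF assms, of 0] by (simp add: prob_space)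
next
  case (Suc m)
  let ?P = "\<lambda>x. prob {\<omega>\<in>space M. n \<le> beta0 eps (pp_point (\<lambda>i. T i \<omega>)) x}"
  define f where "f x = exp (- s * x) * indicator {0..} x * ?P x" for x
  have "mono ?P"
  proof (intro monoI finite_measure_mono_AE)
    fix x y :: real assume "x \<le> y"
    show "AE \<omega> in M. \<omega> \<in> {\<omega>\<in>space M. n \<le> beta0 eps (pp_point (\<lambda>i. T i \<omega>)) x}
        \<longrightarrow> \<omega> \<in> {\<omega>\<in>space M. n \<le> beta0 eps (pp_point (\<lambda>i. T i \<omega>)) y}"
      using AE_T_nonneg
    proof eventually_elim
      case (elim \<omega>)
      then show ?case
        using beta0_mono[of "\<lambda>i. T i \<omega>", OF _ eps_pos \<open>x \<le> y\<close>] by auto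
    qed
  qed simp
  then have "?P \<in> borel_measurable borel"
    by (rule borel_measurable_mono)
  then have [measurable]: "f \<in> borel_measurable borel"
    unfolding f_def by (rule borel_measurable_times[rotated]) measurable
  have "(\<integral>\<^sup>+x. ennreal (f x) \<partial>lborel)
      = (\<integral>\<^sup>+x. ennreal (exp (- s * x) * indicator {0..} x) *
          emeasure M {\<omega>\<in>space M. Suc m \<le> beta0 eps (pp_point (\<lambda>i. T i \<omega>)) x} \<partial>lborel)"
    by (intro nn_integral_cong) (simp add: f_def Suc emeasure_eq_measure ennreal_mult)
  also have "\<dots> = ennreal ((lam / (s * exp ((lam + s) * eps) + lam)) ^ n / s)"
    unfolding Suc by (rule nn_integral_laplace_Suc_le_beta0[OF assms])
  finally have "(f has_integral (lam / (s * exp ((lam + s) * eps) + lam)) ^ n / s) UNIV"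
    using assms lam_pos by (intro nn_integral_has_integral) (auto simp: f_def)
  also have "f = (\<lambda>x. if x \<in> {0..} then exp (- s * x) * ?P x else 0)"
    by (auto simp: f_def)
  finally show ?thesis
    by (simp only: has_integral_restrict_UNIV)
qed

end

theorem theorem2:
  fixes M :: "'a measure" and T :: "nat \<Rightarrow> 'a \<Rightarrow> real"
    and lam eps s :: real and n :: nat
  assumes "prob_space M"
    and "prob_space.indep_vars M (\<lambda>_. borel) T UNIV"
    and "\<And>i. distributed M lborel (T i) (exponential_density lam)"
    and "lam > 0" and "eps > 0" and "s > 0"
  shows "((\<lambda>x. exp (- s * x) *
            measure M {\<omega> \<in> space M. beta0 eps (pp_point (\<lambda>i. T i \<omega>)) x = n})
          has_integral
          (lam ^ n * exp ((lam + s) * eps) / (s * exp ((lam + s) * eps) + lam) ^ (n + 1)))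
          {0..}"
proof -
  interpret poisson_clusters M T lam eps
    using assms by (simp add: poisson_clusters_def poisson_clusters_axioms_def)
  let ?tail = "\<lambda>n x. prob {\<omega>\<in>space M. n \<le> beta0 eps (pp_point (\<lambda>i. T i \<omega>)) x}"
  let ?\<phi> = "lam / (s * exp ((lam + s) * eps) + lam)"
  have "((\<lambda>x. exp (- s * x) * ?tail n x - exp (- s * x) * ?tail (Suc n) x)
      has_integral ?\<phi> ^ n / s - ?\<phi> ^ Suc n / s) {0..}"
    using assms(6) by (intro has_integral_diff has_integral_laplace_le_beta0)
  also have "?\<phi> ^ n / s - ?\<phi> ^ Suc n / s
      = lam ^ n * exp ((lam + s) * eps) / (s * exp ((lam + s) * eps) + lam) ^ (n + 1)"
    using assms(4,6) by (intro power_div_diff_power_Suc_div) (simp_all add: add_pos_pos)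
  finally show ?thesis
    by (simp add: prob_beta0_eq right_diff_distrib)
qed

end
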